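(* Let $M$ be a layered Markov Transition Model, $\pi_e$ a deterministic evaluation policy, $\Phi$ any aggregation scheme, and $\mu=(\mu_h)_{h\in[H]}$ offline distributions with $\mu_h\in\Delta(\mathcal{X}_h\times\mathcal{A})$. Suppose $M$ has pushforward concentrability coefficient $\mathsf{C}_{\mathrm{pf}}=\mathsf{C}_{\mathcal{X}}\mathsf{C}_{\mathcal{A}}$ with respect to $\mu$. Then for every $\epsilon>0$ (for which the maximum defining $\bar{\mathsf{C}}_\epsilon$ is over a nonempty set), $\bar{\mathsf{C}}_\epsilon(M,\Phi,\mu)\le\mathsf{C}_{\mathrm{pf}}$.
   Context: Markov Transition Model $M=(\mathcal{X},\mathcal{A},T,H,\rho)$ with finite layered state space $\mathcal{X}_1\cup\dots\cup\mathcal{X}_H$, finite actions, $T(\cdot|x,a)$ supported on $\mathcal{X}_{h+1}$ for $x\in\mathcal{X}_h$, $\rho\in\Delta(\mathcal{X}_1)$. For $x\in\mathcal{X}_h$ write $\mu(x)=\sum_a\mu_h(x,a)$ and $\mu(a|x)=\mu_h(x,a)/\mu(x)$. Pushforward concentrability: there are $\mathsf{C}_{\mathcal{A}},\mathsf{C}_{\mathcal{X}}>0$ with (a) $\mu(a|x)\ge 1/\mathsf{C}_{\mathcal{A}}$ for all $x,a$; (b) $T(x'|x,a)/\mu(x')<\mathsf{C}_{\mathcal{X}}$ and $\rho(x)/\mu(x)<\mathsf{C}_{\mathcal{X}}$ for all $x,x',a$; then $\mathsf{C}_{\mathrm{pf}}=\mathsf{C}_{\mathcal{X}}\mathsf{C}_{\mathcal{A}}$.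 Aggregation scheme: $\Phi=\Phi_1\cup\dots\cup\Phi_H$, $\Phi_h$ a partition of $\mathcal{X}_h$. Aggregated transitions, for $\phi\in\Phi_h,\phi'\in\Phi_{h+1}$: $\bar T(\phi'|\phi,\pi)=\frac{\sum_{x\in\phi}\sum_{x'\in\phi'}\sum_a\pi(a|x)\mu_h(x,a)T(x'|x,a)}{\sum_{x\in\phi}\sum_a\pi(a|x)\mu_h(x,a)}$. Aggregated occupancy $\bar d_h^\pi(\phi)$: law of $\phi_h$ under $\phi_1\sim\bar\rho$, $\phi_{i+1}\sim\bar T(\cdot|\phi_i,\pi)$, with $\bar\rho(\phi)=\sum_{x\in\phi}\rho(x)$. Aggregated concentrability: $\bar{\mathsf{C}}_\epsilon(M,\Phi,\mu)=\max_h\max\{\frac{\sum_{\phi\in\mathcal{I}}\bar d_h^{\pi_e}(\phi)}{\sum_{\phi\in\mathcal{I}}\sum_{x\in\phi}\mu_h(x,\pi_e(x))}:\mathcal{I}\subseteq\Phi_h,\ \sum_{\phi\in\mathcal{I}}\bar d_h^{\pi_e}(\phi)\ge\epsilon\}$. *)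

theory Defs
  imports Complex_Main
begin

text \<open>States of type 'x (finite), actions of type 'a (finite).
  Layers are given by a map layer :: 'x => nat with values in {1..H};
  X_h = {x. layer x = h}.  T x a x' is T(x'|x,a).\<close>

definition layered_MTM ::
  "nat \<Rightarrow> ('x::finite \<Rightarrow> nat) \<Rightarrow> ('x \<Rightarrow> 'a::finite \<Rightarrow> 'x \<Rightarrow> real) \<Rightarrow> ('x \<Rightarrow> real) \<Rightarrow> bool" where
  "layered_MTM H layer T \<rho> \<longleftrightarrow>
     1 \<le> H \<and> (\<forall>x. layer x \<in> {1..H}) \<and>
     (\<forall>x a x'. 0 \<le> T x a x') \<and>
     (\<forall>x a. layer x < H \<longrightarrow>
         (\<Sum>x'\<in>UNIV. T x a x') = 1 \<and> (\<forall>x'. T x a x' \<noteq> 0 \<longrightarrow> layer x' = layer x + 1)) \<and>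
     (\<forall>x. 0 \<le> \<rho> x) \<and> (\<Sum>x\<in>UNIV. \<rho> x) = 1 \<and> (\<forall>x. \<rho> x \<noteq> 0 \<longrightarrow> layer x = 1)"

text \<open>Offline distributions: mu x a = mu_h(x,a) for x in X_h; mu_h is a distribution on X_h x A.\<close>
definition offline_dists ::
  "nat \<Rightarrow> ('x::finite \<Rightarrow> nat) \<Rightarrow> ('x \<Rightarrow> 'a::finite \<Rightarrow> real) \<Rightarrow> bool" where
  "offline_dists H layer \<mu> \<longleftrightarrow>
     (\<forall>x a. 0 \<le> \<mu> x a) \<and>
     (\<forall>h\<in>{1..H}. (\<Sum>x\<in>{x. layer x = h}. \<Sum>a\<in>UNIV. \<mu> x a) = 1)"

definition state_marg :: "('x \<Rightarrow> 'a::finite \<Rightarrow> real) \<Rightarrow> 'x \<Rightarrow> real" where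
  "state_marg \<mu> x = (\<Sum>a\<in>UNIV. \<mu> x a)"

definition pushforward_conc ::
  "('x::finite \<Rightarrow> 'a::finite \<Rightarrow> 'x \<Rightarrow> real) \<Rightarrow> ('x \<Rightarrow> real) \<Rightarrow> ('x \<Rightarrow> 'a \<Rightarrow> real) \<Rightarrow> real \<Rightarrow> real \<Rightarrow> bool" where
  "pushforward_conc T \<rho> \<mu> CX CA \<longleftrightarrow>
     0 < CX \<and> 0 < CA \<and>
     (\<forall>x a. \<mu> x a / state_marg \<mu> x \<ge> 1 / CA) \<and>
     (\<forall>x x' a. T x a x' / state_marg \<mu> x' < CX) \<and>
     (\<forall>x. \<rho> x / state_marg \<mu> x < CX)"

definition aggregation_scheme ::
  "nat \<Rightarrow> ('x \<Rightarrow> nat) \<Rightarrow> 'x set set \<Rightarrow> bool" where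
  "aggregation_scheme H layer \<Phi> \<longleftrightarrow>
     (\<forall>\<phi>\<in>\<Phi>. \<phi> \<noteq> {} \<and> (\<exists>h\<in>{1..H}. \<forall>x\<in>\<phi>. layer x = h)) \<and>
     (\<forall>\<phi>\<in>\<Phi>. \<forall>\<psi>\<in>\<Phi>. \<phi> \<noteq> \<psi> \<longrightarrow> \<phi> \<inter> \<psi> = {}) \<and>
     \<Union>\<Phi> = UNIV"

definition blocks :: "('x \<Rightarrow> nat) \<Rightarrow> 'x set set \<Rightarrow> nat \<Rightarrow> 'x set set" where
  "blocks layer \<Phi> h = {\<phi>\<in>\<Phi>. \<forall>x\<in>\<phi>. layer x = h}"

text \<open>Policies: pi x a = pi(a|x). Deterministic policy pe induces the indicator policy.\<close>
definition det_policy :: "('x \<Rightarrow> 'a) \<Rightarrow> 'x \<Rightarrow> 'a \<Rightarrow> real" where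
  "det_policy pe x a = (if a = pe x then 1 else 0)"

definition agg_trans ::
  "('x::finite \<Rightarrow> 'a::finite \<Rightarrow> 'x \<Rightarrow> real) \<Rightarrow> ('x \<Rightarrow> 'a \<Rightarrow> real) \<Rightarrow> ('x \<Rightarrow> 'a \<Rightarrow> real)
    \<Rightarrow> 'x set \<Rightarrow> 'x set \<Rightarrow> real" where
  "agg_trans T \<mu> \<pi> \<phi>' \<phi> =
     (\<Sum>x\<in>\<phi>. \<Sum>x'\<in>\<phi>'. \<Sum>a\<in>UNIV. \<pi> x a * \<mu> x a * T x a x') /
     (\<Sum>x\<in>\<phi>. \<Sum>a\<in>UNIV. \<pi> x a * \<mu> x a)"

text \<open>Aggregated occupancy bar d_h^pi(phi), layers indexed from 1.\<close>
fun agg_occ ::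
  "('x \<Rightarrow> nat) \<Rightarrow> 'x set set \<Rightarrow> ('x::finite \<Rightarrow> 'a::finite \<Rightarrow> 'x \<Rightarrow> real) \<Rightarrow> ('x \<Rightarrow> real)
    \<Rightarrow> ('x \<Rightarrow> 'a \<Rightarrow> real) \<Rightarrow> ('x \<Rightarrow> 'a \<Rightarrow> real) \<Rightarrow> nat \<Rightarrow> 'x set \<Rightarrow> real" where
  "agg_occ layer \<Phi> T \<rho> \<mu> \<pi> 0 \<phi> = 0"
| "agg_occ layer \<Phi> T \<rho> \<mu> \<pi> (Suc 0) \<phi> = (\<Sum>x\<in>\<phi>. \<rho> x)"
| "agg_occ layer \<Phi> T \<rho> \<mu> \<pi> (Suc (Suc h)) \<phi>' =
     (\<Sum>\<phi>\<in>blocks layer \<Phi> (Suc h). agg_occ layer \<Phi> T \<rho> \<mu> \<pi> (Suc h) \<phi> * agg_trans T \<mu> \<pi> \<phi>' \<phi>)"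

definition agg_conc_set ::
  "nat \<Rightarrow> ('x \<Rightarrow> nat) \<Rightarrow> 'x set set \<Rightarrow> ('x::finite \<Rightarrow> 'a::finite \<Rightarrow> 'x \<Rightarrow> real) \<Rightarrow> ('x \<Rightarrow> real)
    \<Rightarrow> ('x \<Rightarrow> 'a \<Rightarrow> real) \<Rightarrow> ('x \<Rightarrow> 'a) \<Rightarrow> real \<Rightarrow> real set" where
  "agg_conc_set H layer \<Phi> T \<rho> \<mu> pe \<epsilon> =
     {(\<Sum>\<phi>\<in>I. agg_occ layer \<Phi> T \<rho> \<mu> (det_policy pe) h \<phi>) /
      (\<Sum>\<phi>\<in>I. \<Sum>x\<in>\<phi>. \<mu> x (pe x)) | h I.
        h \<in> {1..H} \<and> I \<subseteq> blocks layer \<Phi> h \<and>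
        (\<Sum>\<phi>\<in>I. agg_occ layer \<Phi> T \<rho> \<mu> (det_policy pe) h \<phi>) \<ge> \<epsilon>}"

definition agg_conc ::
  "nat \<Rightarrow> ('x \<Rightarrow> nat) \<Rightarrow> 'x set set \<Rightarrow> ('x::finite \<Rightarrow> 'a::finite \<Rightarrow> 'x \<Rightarrow> real) \<Rightarrow> ('x \<Rightarrow> real)
    \<Rightarrow> ('x \<Rightarrow> 'a \<Rightarrow> real) \<Rightarrow> ('x \<Rightarrow> 'a) \<Rightarrow> real \<Rightarrow> real" where
  "agg_conc H layer \<Phi> T \<rho> \<mu> pe \<epsilon> = Max (agg_conc_set H layer \<Phi> T \<rho> \<mu> pe \<epsilon>)"

end

theory Submission
  imports Defs
begin

text \<open>Pushforward concentrability bounds the initial distribution and every transition kernel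
  pointwise by \<open>C\<^sub>\<X> \<mu>\<close>, and the evaluation action by \<open>\<mu>(x) \<le> C\<^sub>\<A> \<mu>(x, \<pi>\<^sub>e(x))\<close>.
  An aggregated transition out of a block is a \<open>\<mu>\<close>-weighted average of the original kernels,
  so it is again bounded by \<open>C\<^sub>\<X> \<mu>\<close> on the target block and has total mass at most one.
  Since the aggregated occupancy of each layer is a sub-probability vector, one step of the
  aggregated chain yields \<open>d\<^sub>h(\<phi>) \<le> C\<^sub>\<X> \<mu>(\<phi>)\<close>; summing over a set of blocks and using the
  action bound gives ratios at most \<open>C\<^sub>\<X> C\<^sub>\<A>\<close>.\<close>

lemma divide_le_of_le_mult:
  fixes a b c :: real
  assumes "0 \<le> b" "0 \<le> c" "a \<le> c * b"
  shows "a / b \<le> c"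
  using assms by (auto simp: divide_le_eq mult.commute)

lemma weighted_mean_le:
  fixes w g :: "'b \<Rightarrow> real"
  assumes "\<And>x. x \<in> A \<Longrightarrow> 0 \<le> w x" "\<And>x. x \<in> A \<Longrightarrow> g x \<le> c" "0 \<le> c"
  shows "(\<Sum>x\<in>A. w x * g x) / (\<Sum>x\<in>A. w x) \<le> c"
proof (rule divide_le_of_le_mult)
  have "(\<Sum>x\<in>A. w x * g x) \<le> (\<Sum>x\<in>A. w x * c)"
    using assms by (intro sum_mono mult_left_mono) auto
  then show "(\<Sum>x\<in>A. w x * g x) \<le> c * (\<Sum>x\<in>A. w x)"
    by (simp add: sum_distrib_left mult.commute)
qed (use assms in \<open>auto intro: sum_nonneg\<close>)

lemma sum_disjoint_family_le_sum:
  fixes f :: "'x::finite \<Rightarrow> real"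
  assumes "pairwise disjnt \<P>" "\<And>x. 0 \<le> f x"
  shows "(\<Sum>\<phi>\<in>\<P>. \<Sum>x\<in>\<phi>. f x) \<le> (\<Sum>x\<in>UNIV. f x)"
proof -
  have "(\<Sum>\<phi>\<in>\<P>. \<Sum>x\<in>\<phi>. f x) = (\<Sum>x\<in>\<Union>\<P>. f x)"
    using assms(1) by (subst sum.Union_disjoint) (auto simp: pairwise_def disjnt_def)
  also have "\<dots> \<le> (\<Sum>x\<in>UNIV. f x)"
    using assms(2) by (intro sum_mono2) auto
  finally show ?thesis .
qed

lemma pairwise_disjnt_blocks:
  assumes "aggregation_scheme H layer \<Phi>"
  shows "pairwise disjnt (blocks layer \<Phi> h)"
  using assms unfolding aggregation_scheme_def blocks_def pairwise_def disjnt_def by auto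

lemma agg_trans_det_policy:
  "agg_trans T \<mu> (det_policy pe) \<phi>' \<phi> =
    (\<Sum>x\<in>\<phi>. \<mu> x (pe x) * (\<Sum>x'\<in>\<phi>'. T x (pe x) x')) / (\<Sum>x\<in>\<phi>. \<mu> x (pe x))"
  by (simp add: agg_trans_def det_policy_def of_bool_def[symmetric] mult.assoc sum_distrib_left)

lemma agg_occ_Suc:
  assumes "0 < h"
  shows "agg_occ layer \<Phi> T \<rho> \<mu> \<pi> (Suc h) \<phi>' =
    (\<Sum>\<phi>\<in>blocks layer \<Phi> h. agg_occ layer \<Phi> T \<rho> \<mu> \<pi> h \<phi> * agg_trans T \<mu> \<pi> \<phi>' \<phi>)"
  using assms by (cases h) auto

lemma finite_agg_conc_set: "finite (agg_conc_set H layer \<Phi> T \<rho> \<mu> pe \<epsilon>)"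
proof -
  let ?ratio = "\<lambda>(h, I). (\<Sum>\<phi>\<in>I. agg_occ layer \<Phi> T \<rho> \<mu> (det_policy pe) h \<phi>) /
                        (\<Sum>\<phi>\<in>I. \<Sum>x\<in>\<phi>. \<mu> x (pe x))"
  have "agg_conc_set H layer \<Phi> T \<rho> \<mu> pe \<epsilon> \<subseteq> ?ratio ` ({1..H} \<times> UNIV)"
    unfolding agg_conc_set_def by auto
  then show ?thesis
    by (rule finite_subset) simp
qed

locale pushforward_concentrable =
  fixes H :: nat and layer :: "'x::finite \<Rightarrow> nat"
    and T :: "'x \<Rightarrow> 'a::finite \<Rightarrow> 'x \<Rightarrow> real" and \<rho> :: "'x \<Rightarrow> real"
    and \<mu> :: "'x \<Rightarrow> 'a \<Rightarrow> real" and pe :: "'x \<Rightarrow> 'a"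
    and \<Phi> :: "'x set set" and CX CA :: real
  assumes MTM: "layered_MTM H layer T \<rho>"
    and offline: "offline_dists H layer \<mu>"
    and aggregation: "aggregation_scheme H layer \<Phi>"
    and conc: "pushforward_conc T \<rho> \<mu> CX CA"
begin

abbreviation "Tbar \<equiv> agg_trans T \<mu> (det_policy pe)"
abbreviation "dbar \<equiv> agg_occ layer \<Phi> T \<rho> \<mu> (det_policy pe)"

lemma CX_pos: "0 < CX" and CA_pos: "0 < CA"
  using conc by (auto simp: pushforward_conc_def)

lemma \<mu>_nonneg: "0 \<le> \<mu> x a"
  using offline by (simp add: offline_dists_def)

lemma T_nonneg: "0 \<le> T x a x'"
  using MTM by (simp add: layered_MTM_def)

lemma \<rho>_nonneg: "0 \<le> \<rho> x"
  using MTM by (simp add: layered_MTM_def)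

lemma state_marg_nonneg: "0 \<le> state_marg \<mu> x"
  by (simp add: state_marg_def sum_nonneg \<mu>_nonneg)

lemma state_marg_pos: "0 < state_marg \<mu> x"
proof -
  have "1 / CA \<le> \<mu> x (pe x) / state_marg \<mu> x"
    using conc by (simp add: pushforward_conc_def)
  then have "state_marg \<mu> x \<noteq> 0"
    using CA_pos by auto
  with state_marg_nonneg show ?thesis
    by (simp add: order_less_le)
qed

lemma state_marg_le: "state_marg \<mu> x \<le> CA * \<mu> x a"
proof -
  have "1 / CA \<le> \<mu> x a / state_marg \<mu> x"
    using conc by (simp add: pushforward_conc_def)
  then show ?thesis
    using state_marg_pos[of x] CA_pos by (simp add: field_simps)
qed

lemma \<rho>_le: "\<rho> x \<le> CX * state_marg \<mu> x"
  using conc state_marg_pos[of x] by (simp add: pushforward_conc_def divide_less_eq less_imp_le)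

lemma T_le: "T x a x' \<le> CX * state_marg \<mu> x'"
  using conc state_marg_pos[of x'] by (simp add: pushforward_conc_def divide_less_eq less_imp_le)

lemma Tbar_nonneg: "0 \<le> Tbar \<phi>' \<phi>"
  unfolding agg_trans_det_policy
  by (intro divide_nonneg_nonneg sum_nonneg mult_nonneg_nonneg \<mu>_nonneg T_nonneg)

lemma Tbar_le: "Tbar \<phi>' \<phi> \<le> CX * (\<Sum>x'\<in>\<phi>'. state_marg \<mu> x')"
  unfolding agg_trans_det_policy
proof (rule weighted_mean_le)
  fix x
  show "(\<Sum>x'\<in>\<phi>'. T x (pe x) x') \<le> CX * (\<Sum>x'\<in>\<phi>'. state_marg \<mu> x')"
    unfolding sum_distrib_left by (intro sum_mono T_le)
qed (auto intro!: mult_nonneg_nonneg sum_nonneg \<mu>_nonneg state_marg_nonneg less_imp_le[OF CX_pos])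

lemma sum_Tbar_le_1:
  assumes "\<phi> \<in> blocks layer \<Phi> h" "h < H"
  shows "(\<Sum>\<phi>'\<in>blocks layer \<Phi> h'. Tbar \<phi>' \<phi>) \<le> 1"
proof -
  have "(\<Sum>\<phi>'\<in>blocks layer \<Phi> h'. Tbar \<phi>' \<phi>) =
    (\<Sum>x\<in>\<phi>. \<mu> x (pe x) * (\<Sum>\<phi>'\<in>blocks layer \<Phi> h'. \<Sum>x'\<in>\<phi>'. T x (pe x) x')) / (\<Sum>x\<in>\<phi>. \<mu> x (pe x))"
    unfolding agg_trans_det_policy sum_divide_distrib[symmetric] sum_distrib_left
    by (rule arg_cong[where f = "\<lambda>t. t / _"]) (rule sum.swap)
  also have "\<dots> \<le> 1"
  proof (rule weighted_mean_le)
    fix x assume "x \<in> \<phi>"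
    then have "layer x < H"
      using assms by (simp add: blocks_def)
    have "(\<Sum>\<phi>'\<in>blocks layer \<Phi> h'. \<Sum>x'\<in>\<phi>'. T x (pe x) x') \<le> (\<Sum>x'\<in>UNIV. T x (pe x) x')"
      by (intro sum_disjoint_family_le_sum pairwise_disjnt_blocks[OF aggregation] T_nonneg)
    also have "\<dots> = 1"
      using \<open>layer x < H\<close> MTM by (simp add: layered_MTM_def)
    finally show "(\<Sum>\<phi>'\<in>blocks layer \<Phi> h'. \<Sum>x'\<in>\<phi>'. T x (pe x) x') \<le> 1" .
  qed (simp_all add: \<mu>_nonneg)
  finally show ?thesis .
qed

lemma dbar_nonneg: "0 \<le> dbar h \<phi>"
proof (induction h arbitrary: \<phi>)
  case (Suc h)
  then show ?case
    by (cases "h = 0") (auto simp: agg_occ_Suc intro!: sum_nonneg mult_nonneg_nonneg \<rho>_nonneg Tbar_nonneg)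
qed simp

lemma sum_dbar_le_1:
  assumes "0 < h" "h \<le> H"
  shows "(\<Sum>\<phi>\<in>blocks layer \<Phi> h. dbar h \<phi>) \<le> 1"
  using assms
proof (induction h rule: nat_induct_non_zero)
  case 1
  have "(\<Sum>\<phi>\<in>blocks layer \<Phi> 1. dbar 1 \<phi>) \<le> (\<Sum>x\<in>UNIV. \<rho> x)"
    using sum_disjoint_family_le_sum[OF pairwise_disjnt_blocks[OF aggregation] \<rho>_nonneg] by simp
  also have "\<dots> = 1"
    using MTM by (simp add: layered_MTM_def)
  finally show ?case .
next
  case (Suc h)
  have "(\<Sum>\<phi>'\<in>blocks layer \<Phi> (Suc h). dbar (Suc h) \<phi>') =
    (\<Sum>\<phi>\<in>blocks layer \<Phi> h. dbar h \<phi> * (\<Sum>\<phi>'\<in>blocks layer \<Phi> (Suc h). Tbar \<phi>' \<phi>))"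
    unfolding agg_occ_Suc[OF \<open>0 < h\<close>] sum_distrib_left by (rule sum.swap)
  also have "\<dots> \<le> (\<Sum>\<phi>\<in>blocks layer \<Phi> h. dbar h \<phi>)"
    using Suc.prems by (intro sum_mono mult_right_le_one_le dbar_nonneg sum_nonneg Tbar_nonneg sum_Tbar_le_1) auto
  also have "\<dots> \<le> 1"
    using Suc by simp
  finally show ?case .
qed

lemma dbar_le:
  assumes "0 < h" "h \<le> H"
  shows "dbar h \<phi> \<le> CX * (\<Sum>x\<in>\<phi>. state_marg \<mu> x)"
proof (cases h)
  case (Suc g)
  show ?thesis
  proof (cases g)
    case 0
    then show ?thesis
      using Suc by (simp add: sum_distrib_left sum_mono \<rho>_le)
  next
    case (Suc g')
    then have "0 < g" "g \<le> H"
      using \<open>h = Suc g\<close> assms by auto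
    have "dbar h \<phi> \<le> (\<Sum>\<psi>\<in>blocks layer \<Phi> g. dbar g \<psi> * (CX * (\<Sum>x\<in>\<phi>. state_marg \<mu> x)))"
      unfolding \<open>h = Suc g\<close> agg_occ_Suc[OF \<open>0 < g\<close>]
      by (intro sum_mono mult_left_mono Tbar_le dbar_nonneg)
    also have "\<dots> = (\<Sum>\<psi>\<in>blocks layer \<Phi> g. dbar g \<psi>) * (CX * (\<Sum>x\<in>\<phi>. state_marg \<mu> x))"
      by (simp add: sum_distrib_right)
    also have "\<dots> \<le> CX * (\<Sum>x\<in>\<phi>. state_marg \<mu> x)"
      using sum_dbar_le_1[OF \<open>0 < g\<close> \<open>g \<le> H\<close>] CX_pos
      by (intro mult_left_le_one_le) (auto intro!: mult_nonneg_nonneg sum_nonneg state_marg_nonneg dbar_nonneg)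
    finally show ?thesis .
  qed
qed (use assms in simp)

lemma agg_conc_set_le:
  assumes "r \<in> agg_conc_set H layer \<Phi> T \<rho> \<mu> pe \<epsilon>"
  shows "r \<le> CX * CA"
proof -
  obtain h I where r: "r = (\<Sum>\<phi>\<in>I. dbar h \<phi>) / (\<Sum>\<phi>\<in>I. \<Sum>x\<in>\<phi>. \<mu> x (pe x))"
    and h: "0 < h" "h \<le> H"
    using assms unfolding agg_conc_set_def by auto
  have "(\<Sum>\<phi>\<in>I. dbar h \<phi>) \<le> (\<Sum>\<phi>\<in>I. CX * (\<Sum>x\<in>\<phi>. state_marg \<mu> x))"
    using h by (intro sum_mono dbar_le)
  also have "\<dots> \<le> (\<Sum>\<phi>\<in>I. CX * (\<Sum>x\<in>\<phi>. CA * \<mu> x (pe x)))"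
    using CX_pos by (intro sum_mono mult_left_mono state_marg_le) auto
  also have "\<dots> = CX * CA * (\<Sum>\<phi>\<in>I. \<Sum>x\<in>\<phi>. \<mu> x (pe x))"
    by (simp add: sum_distrib_left mult.assoc)
  finally show ?thesis
    unfolding r using CX_pos CA_pos
    by (intro divide_le_of_le_mult sum_nonneg \<mu>_nonneg) auto
qed

end

theorem mainTheorem8:
  fixes H :: nat and layer :: "'x::finite \<Rightarrow> nat"
    and T :: "'x \<Rightarrow> 'a::finite \<Rightarrow> 'x \<Rightarrow> real" and \<rho> :: "'x \<Rightarrow> real"
    and \<mu> :: "'x \<Rightarrow> 'a \<Rightarrow> real" and pe :: "'x \<Rightarrow> 'a"
    and \<Phi> :: "'x set set" and CX CA \<epsilon> :: real
  assumes "layered_MTM H layer T \<rho>"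
    and "offline_dists H layer \<mu>"
    and "aggregation_scheme H layer \<Phi>"
    and "pushforward_conc T \<rho> \<mu> CX CA"
    and "\<epsilon> > 0"
    and "agg_conc_set H layer \<Phi> T \<rho> \<mu> pe \<epsilon> \<noteq> {}"
  shows "agg_conc H layer \<Phi> T \<rho> \<mu> pe \<epsilon> \<le> CX * CA"
proof -
  interpret pushforward_concentrable H layer T \<rho> \<mu> pe \<Phi> CX CA
    using assms(1-4) by unfold_locales
  show ?thesis
    unfolding agg_conc_def
    by (intro Max.boundedI finite_agg_conc_set assms(6) agg_conc_set_le)
qed

end
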